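(* Let $V$ be a finite set with positive element weights ($\vert A \vert$ = total weight of $A \subseteq V$), let $\mathcal{P}, \mathcal{P}'$ be partitions of $V$ into nonempty parts, and let $P_s \ne P_t \in \mathcal{P}$. Let $\mathcal{S}_s, \mathcal{S}_t \subseteq \mathcal{P}$ with $P_s \in \mathcal{S}_s$, $P_t \in \mathcal{S}_t$ and $\mathcal{S}_s \cap \mathcal{S}_t = \emptyset$, and let $\mathcal{S} \subseteq \mathcal{P}$ with $\mathcal{S} \supseteq \mathcal{S}_s$ and $\mathcal{S} \cap \mathcal{S}_t = \emptyset$. Define $$b(\mathcal{S}_s, \mathcal{S}_t) := \sum_{P' \in \mathcal{P}'} \min\{\vert U_{\mathcal{S}_s} \cap P' \vert, \vert U_{\mathcal{S}_t} \cap P' \vert\}.$$ Then $b(\mathcal{S}_s, \mathcal{S}_t) \le \phi_{\mathcal{P}'}(\mathcal{S})$, where $\phi_{\mathcal{P}'}(\mathcal{S}) := \min_{\mathcal{S}' \subseteq \mathcal{P}'} \vert U_{\mathcal{S}} \triangle U_{\mathcal{S}'} \vert$.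
   Context: $U_{\mathcal{S}}$ denotes the union of the sets in $\mathcal{S}$; $\triangle$ is symmetric difference. *)

theory Defs
  imports Complex_Main
begin

definition is_partition :: "'a set \<Rightarrow> 'a set set \<Rightarrow> bool" where
  "is_partition V P \<longleftrightarrow> \<Union>P = V \<and> {} \<notin> P \<and>
     (\<forall>A\<in>P. \<forall>B\<in>P. A \<noteq> B \<longrightarrow> A \<inter> B = {})"

definition wt :: "('a \<Rightarrow> real) \<Rightarrow> 'a set \<Rightarrow> real" where
  "wt w A = (\<Sum>x\<in>A. w x)"

definition bval :: "('a \<Rightarrow> real) \<Rightarrow> 'a set set \<Rightarrow> 'a set set \<Rightarrow> 'a set set \<Rightarrow> real" where
  "bval w P' Ss St = (\<Sum>Q\<in>P'. min (wt w (\<Union>Ss \<inter> Q)) (wt w (\<Union>St \<inter> Q)))"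

definition phi :: "('a \<Rightarrow> real) \<Rightarrow> 'a set set \<Rightarrow> 'a set set \<Rightarrow> real" where
  "phi w P' S = Min ((\<lambda>S'. wt w ((\<Union>S - \<Union>S') \<union> (\<Union>S' - \<Union>S))) ` Pow P')"

end

theory Submission
  imports Defs
begin

text \<open>Fix any \<open>S' \<subseteq> P'\<close> and write \<open>X = U\<^sub>S\<close>, \<open>Y = U\<^sub>S\<^sub>'\<close>. Since \<open>P'\<close> partitions \<open>V\<close>,
  the weight of \<open>X \<triangle> Y\<close> is the sum of the weights of its traces on the parts \<open>Q \<in> P'\<close>, and
  each part \<open>Q\<close> lies either inside \<open>Y\<close> or outside it. In the first case \<open>U\<^sub>S\<^sub>t \<inter> Q\<close>, which
  misses \<open>X\<close>, lies in \<open>Y - X\<close>; in the second \<open>U\<^sub>S\<^sub>s \<inter> Q\<close>, which lies in \<open>X\<close>, lies in \<open>X - Y\<close>.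
  Either way the trace of \<open>X \<triangle> Y\<close> on \<open>Q\<close> weighs at least the \<open>Q\<close>-summand of \<open>b\<close>.\<close>

lemma wt_mono:
  assumes "finite F" "\<And>x. x \<in> F \<Longrightarrow> 0 \<le> w x" "E \<subseteq> F"
  shows "wt w E \<le> wt w F"
  unfolding wt_def using assms by (intro sum_mono2) auto

lemma is_partition_finite:
  assumes "is_partition V P" "finite V"
  shows "finite P" "\<And>Q. Q \<in> P \<Longrightarrow> finite Q"
proof -
  have "P \<subseteq> Pow V"
    using assms(1) unfolding is_partition_def by blast
  then show "finite P" "\<And>Q. Q \<in> P \<Longrightarrow> finite Q"
    using assms(2) by (auto intro: finite_subset)
qed

lemma wt_eq_sum_partition:
  assumes "is_partition V P" "finite V" "D \<subseteq> V"
  shows "wt w D = (\<Sum>Q\<in>P. wt w (D \<inter> Q))"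
proof -
  have "D = (\<Union>Q\<in>P. D \<inter> Q)"
    using assms(1,3) unfolding is_partition_def by blast
  then have "wt w D = sum w (\<Union>Q\<in>P. D \<inter> Q)"
    unfolding wt_def by simp
  also have "\<dots> = (\<Sum>Q\<in>P. wt w (D \<inter> Q))"
    unfolding wt_def
    using assms(1) is_partition_finite[OF assms(1,2)]
    by (intro sum.UNION_disjoint) (auto simp: is_partition_def)
  finally show ?thesis .
qed

lemma is_partition_Union_subfamily_Int:
  assumes "is_partition V P" "T \<subseteq> P" "Q \<in> P"
  shows "\<Union>T \<inter> Q = (if Q \<in> T then Q else {})"
proof (cases "Q \<in> T")
  case False
  have "R \<inter> Q = {}" if "R \<in> T" for R
    using assms False that unfolding is_partition_def by (metis subsetD)
  with False show ?thesis by auto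
qed auto

lemma is_partition_Union_disjoint_subfamilies:
  assumes "is_partition V P" "S \<subseteq> P" "T \<subseteq> P" "S \<inter> T = {}"
  shows "\<Union>S \<inter> \<Union>T = {}"
proof -
  have "R \<inter> R' = {}" if "R \<in> S" "R' \<in> T" for R R'
    using assms that unfolding is_partition_def by (metis disjoint_iff subsetD)
  then show ?thesis by blast
qed

lemma min_wt_le_wt_symdiff_Int:
  assumes "finite Q" "\<And>x. x \<in> Q \<Longrightarrow> 0 \<le> w x"
    and "A \<subseteq> X" "B \<inter> X = {}" "Y \<inter> Q = Q \<or> Y \<inter> Q = {}"
  shows "min (wt w (A \<inter> Q)) (wt w (B \<inter> Q)) \<le> wt w (((X - Y) \<union> (Y - X)) \<inter> Q)"
proof -
  have wt_le: "wt w E \<le> wt w (((X - Y) \<union> (Y - X)) \<inter> Q)"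
    if "E \<subseteq> ((X - Y) \<union> (Y - X)) \<inter> Q" for E
    using that assms(1,2) by (intro wt_mono) auto
  from assms(5) show ?thesis
  proof
    assume "Y \<inter> Q = Q"
    then have "wt w (B \<inter> Q) \<le> wt w (((X - Y) \<union> (Y - X)) \<inter> Q)"
      using assms(4) by (intro wt_le) blast
    then show ?thesis by simp
  next
    assume "Y \<inter> Q = {}"
    then have "wt w (A \<inter> Q) \<le> wt w (((X - Y) \<union> (Y - X)) \<inter> Q)"
      using assms(3) by (intro wt_le) blast
    then show ?thesis by simp
  qed
qed

lemma bval_le_wt_symdiff:
  assumes "is_partition V P'" "finite V" "\<And>x. x \<in> V \<Longrightarrow> 0 \<le> w x"
    and "\<Union>Ss \<subseteq> X" "\<Union>St \<inter> X = {}" "X \<subseteq> V" "S' \<subseteq> P'"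
  shows "bval w P' Ss St \<le> wt w ((X - \<Union>S') \<union> (\<Union>S' - X))"
proof -
  have parts: "Q \<subseteq> V" "finite Q" if "Q \<in> P'" for Q
    using that assms(1) is_partition_finite[OF assms(1,2)]
    unfolding is_partition_def by auto
  have "\<Union>S' \<subseteq> V"
    using assms(1,7) unfolding is_partition_def by blast
  then have "wt w ((X - \<Union>S') \<union> (\<Union>S' - X)) = (\<Sum>Q\<in>P'. wt w (((X - \<Union>S') \<union> (\<Union>S' - X)) \<inter> Q))"
    using assms(6) by (intro wt_eq_sum_partition[OF assms(1,2)]) blast
  moreover have "min (wt w (\<Union>Ss \<inter> Q)) (wt w (\<Union>St \<inter> Q))
      \<le> wt w (((X - \<Union>S') \<union> (\<Union>S' - X)) \<inter> Q)" if "Q \<in> P'" for Q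
    using that parts assms(3-5) is_partition_Union_subfamily_Int[OF assms(1,7) that]
    by (intro min_wt_le_wt_symdiff_Int) auto
  ultimately show ?thesis
    unfolding bval_def by (simp add: sum_mono)
qed

lemma phi_attained:
  assumes "finite P'"
  obtains S' where "S' \<subseteq> P'" "phi w P' S = wt w ((\<Union>S - \<Union>S') \<union> (\<Union>S' - \<Union>S))"
proof -
  have "phi w P' S \<in> (\<lambda>S'. wt w ((\<Union>S - \<Union>S') \<union> (\<Union>S' - \<Union>S))) ` Pow P'"
    unfolding phi_def using assms by (intro Min_in) auto
  then show ?thesis
    using that by blast
qed

theorem proposition6:
  fixes V :: "'a set" and w :: "'a \<Rightarrow> real"
    and P P' Ss St S :: "'a set set" and Ps Pt :: "'a set"
  assumes "finite V"
    and "\<And>x. x \<in> V \<Longrightarrow> w x > 0"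
    and "is_partition V P" and "is_partition V P'"
    and "Ps \<in> P" and "Pt \<in> P" and "Ps \<noteq> Pt"
    and "Ss \<subseteq> P" and "St \<subseteq> P" and "Ps \<in> Ss" and "Pt \<in> St"
    and "Ss \<inter> St = {}"
    and "S \<subseteq> P" and "Ss \<subseteq> S" and "S \<inter> St = {}"
  shows "bval w P' Ss St \<le> phi w P' S"
proof -
  obtain S' where "S' \<subseteq> P'" and phi: "phi w P' S = wt w ((\<Union>S - \<Union>S') \<union> (\<Union>S' - \<Union>S))"
    using phi_attained is_partition_finite(1)[OF assms(4,1)] by blast
  have "\<Union>St \<inter> \<Union>S = {}"
    using is_partition_Union_disjoint_subfamilies[OF assms(3,9,13)] assms(15) by blast
  moreover have "\<Union>S \<subseteq> V"
    using assms(3,13) unfolding is_partition_def by blast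
  moreover have "\<Union>Ss \<subseteq> \<Union>S"
    using assms(14) by blast
  ultimately have "bval w P' Ss St \<le> wt w ((\<Union>S - \<Union>S') \<union> (\<Union>S' - \<Union>S))"
    using assms(1,4) \<open>S' \<subseteq> P'\<close> assms(2)[THEN less_imp_le]
    by (intro bval_le_wt_symdiff[where V = V]) auto
  then show ?thesis
    using phi by simp
qed

end
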